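(* For all $M,M'\in\mathcal M$ and $h\in[H]$, $\frac1K\mathcal E_B(M,M',h)\le\mathcal W_F(M,M',h)$.
   Context: Factored MDP setting: $\mathcal O$ finite, $\mathcal X=[H]\times\mathcal O^d$ layered by time, $|\mathcal A|=K$; known parent sets $\mathrm{pa}_i\subseteq[d]$; transitions $P(x'|x,a)=\prod_{i=1}^dP^{(i)}[x'[i]\mid x[\mathrm{pa}_i],a,h]$; known reward $R^\star$ shared by all models, rewards in $[0,1]$ with total reward $\le1$; $\mathcal M$ is the set of all models with reward $R^\star$ and transitions factorizing with these parents, the true model $M^\star\in\mathcal M$. For a model $M$: $V_M,\pi_M$ its optimal value function and greedy optimal policy; $x_h\sim\pi$ the step-$h$ context when running $\pi$ in the true MDP; $(r,x')\sim M_h$ means $r\sim R^\star(x_h,a_h)$, $x'\sim P(x_h,a_h)$. $\mathcal E_B(M,M',h)=\mathbb E_{x_h\sim\pi_M,a_h\sim\pi_{M'}}[\mathbb E_{(r,x')\sim M'_h}[r+V_{M'}(x')]-\mathbb E_{(r,x')\sim M^\star_h}[r+V_{M'}(x')]]$. Test class $\mathcal F=\{g_1+\dots+g_d:g_i\in\mathcal G_i\}$, $\mathcal G_i$ all $\{-1,1\}$-valued functions of $(x,a,r,x')$ depending only on $(x[\mathrm{pa}_i],a,h,x'[i])$. $\mathcal W_F(M,M',h)=\max_{f\in\mathcal F}\mathbb E_{x_h\sim\pi_M,a_h\sim U(\mathcal A)}[\mathbb E_{M'_h}f(x_h,a_h,r,x')-\mathbb E_{M^\star_h}f(x_h,a_h,r,x')]$.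 *)

theory Defs
  imports "HOL-Probability.Probability" "HOL-Probability.Product_PMF"
begin

text \<open>Observations: finite type 'o; factor index: finite type 'd
 (so d = CARD('d)); actions: finite type 'a (K = CARD('a)).  A context at layer h is
 the pair (h, s) with s :: 'd => 'o; layers are 0-indexed h = 0, ..., H-1.
 A model is given by its factor kernels  M i h s a  (distribution of x'[i]);
 the reward distribution R h s a (a real pmf) is shared by all models.\<close>

type_synonym ('d, 'o, 'a) model = "'d \<Rightarrow> nat \<Rightarrow> ('d \<Rightarrow> 'o) \<Rightarrow> 'a \<Rightarrow> 'o pmf"

definition trans :: "('d::finite, 'o, 'a) model \<Rightarrow> nat \<Rightarrow> ('d \<Rightarrow> 'o) \<Rightarrow> 'a \<Rightarrow> ('d \<Rightarrow> 'o) pmf" where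
  "trans M h s a = Pi_pmf UNIV undefined (\<lambda>i. M i h s a)"

definition factored :: "('d \<Rightarrow> 'd set) \<Rightarrow> ('d, 'o, 'a) model \<Rightarrow> bool" where
  "factored pa M \<longleftrightarrow>
     (\<forall>i h s t a. restrict s (pa i) = restrict t (pa i) \<longrightarrow> M i h s a = M i h t a)"

fun Vrem :: "(nat \<Rightarrow> ('d::finite \<Rightarrow> 'o::finite) \<Rightarrow> 'a::finite \<Rightarrow> real pmf) \<Rightarrow> ('d, 'o, 'a) model
              \<Rightarrow> nat \<Rightarrow> nat \<Rightarrow> ('d \<Rightarrow> 'o) \<Rightarrow> real" where
  "Vrem R M 0 h s = 0"
| "Vrem R M (Suc k) h s =
     Max (range (\<lambda>a. measure_pmf.expectation (pair_pmf (R h s a) (trans M h s a))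
                       (\<lambda>(r, s'). r + Vrem R M k (Suc h) s')))"

definition Vopt :: "(nat \<Rightarrow> ('d::finite \<Rightarrow> 'o::finite) \<Rightarrow> 'a::finite \<Rightarrow> real pmf) \<Rightarrow> ('d, 'o, 'a) model
              \<Rightarrow> nat \<Rightarrow> nat \<Rightarrow> ('d \<Rightarrow> 'o) \<Rightarrow> real" where
  "Vopt R M H h s = Vrem R M (H - h) h s"

definition Qopt :: "(nat \<Rightarrow> ('d::finite \<Rightarrow> 'o::finite) \<Rightarrow> 'a::finite \<Rightarrow> real pmf) \<Rightarrow> ('d, 'o, 'a) model
              \<Rightarrow> nat \<Rightarrow> nat \<Rightarrow> ('d \<Rightarrow> 'o) \<Rightarrow> 'a \<Rightarrow> real" where
  "Qopt R M H h s a = measure_pmf.expectation (pair_pmf (R h s a) (trans M h s a))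
                        (\<lambda>(r, s'). r + Vopt R M H (Suc h) s')"

definition greedy :: "(nat \<Rightarrow> ('d::finite \<Rightarrow> 'o::finite) \<Rightarrow> 'a::finite \<Rightarrow> real pmf) \<Rightarrow> ('d, 'o, 'a) model
              \<Rightarrow> nat \<Rightarrow> (nat \<Rightarrow> ('d \<Rightarrow> 'o) \<Rightarrow> 'a) \<Rightarrow> bool" where
  "greedy R M H pol \<longleftrightarrow> (\<forall>h<H. \<forall>s. Qopt R M H h s (pol h s) = Vopt R M H h s)"

fun sdist :: "('d::finite \<Rightarrow> 'o) pmf \<Rightarrow> ('d, 'o, 'a) model \<Rightarrow> (nat \<Rightarrow> ('d \<Rightarrow> 'o) \<Rightarrow> 'a)
              \<Rightarrow> nat \<Rightarrow> ('d \<Rightarrow> 'o) pmf" where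
  "sdist s0 M pol 0 = s0"
| "sdist s0 M pol (Suc h) = bind_pmf (sdist s0 M pol h) (\<lambda>s. trans M h s (pol h s))"

definition EB :: "(nat \<Rightarrow> ('d::finite \<Rightarrow> 'o::finite) \<Rightarrow> 'a::finite \<Rightarrow> real pmf) \<Rightarrow> nat
              \<Rightarrow> ('d \<Rightarrow> 'o) pmf \<Rightarrow> ('d, 'o, 'a) model
              \<Rightarrow> (nat \<Rightarrow> ('d \<Rightarrow> 'o) \<Rightarrow> 'a) \<Rightarrow> ('d, 'o, 'a) model \<Rightarrow> (nat \<Rightarrow> ('d \<Rightarrow> 'o) \<Rightarrow> 'a)
              \<Rightarrow> nat \<Rightarrow> real" where
  "EB R H s0 Mstar piM M' piM' h =
     measure_pmf.expectation (sdist s0 Mstar piM h)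
       (\<lambda>s. let a = piM' h s in
             measure_pmf.expectation (pair_pmf (R h s a) (trans M' h s a))
               (\<lambda>(r, s'). r + Vopt R M' H (Suc h) s')
           - measure_pmf.expectation (pair_pmf (R h s a) (trans Mstar h s a))
               (\<lambda>(r, s'). r + Vopt R M' H (Suc h) s'))"

definition Gset :: "('d \<Rightarrow> 'd set) \<Rightarrow> 'd
      \<Rightarrow> (nat \<Rightarrow> ('d \<Rightarrow> 'o) \<Rightarrow> 'a \<Rightarrow> real \<Rightarrow> ('d \<Rightarrow> 'o) \<Rightarrow> real) set" where
  "Gset pa i = {g. (\<forall>h s a r s'. g h s a r s' \<in> {-1, 1}) \<and>
      (\<forall>h s t a r r' s' t'. restrict s (pa i) = restrict t (pa i) \<and> s' i = t' i
          \<longrightarrow> g h s a r s' = g h t a r' t')}"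

definition Fclass :: "('d::finite \<Rightarrow> 'd set)
      \<Rightarrow> (nat \<Rightarrow> ('d \<Rightarrow> 'o) \<Rightarrow> 'a \<Rightarrow> real \<Rightarrow> ('d \<Rightarrow> 'o) \<Rightarrow> real) set" where
  "Fclass pa = {f. \<exists>g. (\<forall>i. g i \<in> Gset pa i) \<and> f = (\<lambda>h s a r s'. \<Sum>i\<in>UNIV. g i h s a r s')}"

text \<open>Witnessed model misfit W_F(M, M', h) (the max is written as a supremum).\<close>
definition WF :: "(nat \<Rightarrow> ('d::finite \<Rightarrow> 'o::finite) \<Rightarrow> 'a::finite \<Rightarrow> real pmf) \<Rightarrow> ('d \<Rightarrow> 'd set)
              \<Rightarrow> ('d \<Rightarrow> 'o) pmf \<Rightarrow> ('d, 'o, 'a) model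
              \<Rightarrow> (nat \<Rightarrow> ('d \<Rightarrow> 'o) \<Rightarrow> 'a) \<Rightarrow> ('d, 'o, 'a) model \<Rightarrow> nat \<Rightarrow> real" where
  "WF R pa s0 Mstar piM M' h =
     (SUP f \<in> Fclass pa.
        measure_pmf.expectation (pair_pmf (sdist s0 Mstar piM h) (pmf_of_set UNIV))
          (\<lambda>(s, a). measure_pmf.expectation (pair_pmf (R h s a) (trans M' h s a))
                        (\<lambda>(r, s'). f h s a r s')
                    - measure_pmf.expectation (pair_pmf (R h s a) (trans Mstar h s a))
                        (\<lambda>(r, s'). f h s a r s')))"

end

theory Submission
  imports Defs
begin

text \<open>
  At a fixed context and action the reward terms of the Bellman error cancel, and since the total
  reward is at most 1 the remaining integrand satisfies \<open>\<bar>V\<^sub>M\<^sub>'\<bar> \<le> 1\<close>. For product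
  distributions, swapping the factors one at a time bounds the difference of the expectations of
  such a function by the sum of the L1 distances of the factor kernels. That sum is attained by the
  test function \<open>\<Sum>\<^sub>i sign(P'\<^sub>i - P\<^sup>\<star>\<^sub>i)(x'[i])\<close>, which lies in \<open>\<F>\<close> because both kernels
  depend only on the parents. Finally, this L1 bound is nonnegative for every action, so replacing
  the action of \<open>\<pi>\<^sub>M\<^sub>'\<close> by a uniform one loses at most a factor K.
\<close>

lemma expectation_finite_type:
  fixes f :: "'x::finite \<Rightarrow> real"
  shows "measure_pmf.expectation p f = (\<Sum>x\<in>UNIV. pmf p x * f x)"
  by (subst integral_measure_pmf[of UNIV]) auto

lemma expectation_pair_pmf_finite:
  fixes P :: "'x::finite pmf" and Q :: "'y::finite pmf" and \<phi> :: "'x \<times> 'y \<Rightarrow> real"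
  shows "measure_pmf.expectation (pair_pmf P Q) \<phi>
       = measure_pmf.expectation P (\<lambda>x. measure_pmf.expectation Q (\<lambda>y. \<phi> (x, y)))"
proof -
  have "measure_pmf.expectation (pair_pmf P Q) \<phi>
      = (\<Sum>x\<in>UNIV. \<Sum>y\<in>UNIV. pmf (pair_pmf P Q) (x, y) * \<phi> (x, y))"
    by (simp add: expectation_finite_type sum.cartesian_product' flip: UNIV_Times_UNIV)
  then show ?thesis
    by (simp add: expectation_finite_type pmf_pair sum_distrib_left mult.assoc)
qed

lemma abs_expectation_le:
  fixes f :: "'x \<Rightarrow> real"
  assumes "\<And>x. \<bar>f x\<bar> \<le> C"
  shows "\<bar>measure_pmf.expectation p f\<bar> \<le> C"
proof -
  have "\<bar>measure_pmf.expectation p f\<bar> \<le> measure_pmf.expectation p (\<lambda>x. \<bar>f x\<bar>)"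
    by (rule integral_abs_bound)
  also have "\<dots> \<le> C"
    using assms by (intro measure_pmf.integral_le_const measure_pmf.integrable_const_bound[where B=C]) auto
  finally show ?thesis .
qed

definition l1_dist :: "'o::finite pmf \<Rightarrow> 'o pmf \<Rightarrow> real" where
  "l1_dist p q = (\<Sum>z\<in>UNIV. \<bar>pmf p z - pmf q z\<bar>)"

lemma l1_dist_nonneg: "0 \<le> l1_dist p q"
  unfolding l1_dist_def by (intro sum_nonneg) auto

lemma expectation_diff_le_l1_dist:
  fixes W :: "'o::finite \<Rightarrow> real"
  assumes "\<And>z. \<bar>W z\<bar> \<le> 1"
  shows "measure_pmf.expectation p W - measure_pmf.expectation q W \<le> l1_dist p q"
proof -
  have "measure_pmf.expectation p W - measure_pmf.expectation q W
        = (\<Sum>z\<in>UNIV. (pmf p z - pmf q z) * W z)"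
    by (simp add: expectation_finite_type sum_subtractf left_diff_distrib)
  also have "\<dots> \<le> (\<Sum>z\<in>UNIV. \<bar>pmf p z - pmf q z\<bar> * \<bar>W z\<bar>)"
    by (intro sum_mono) (metis abs_ge_self abs_mult)
  also have "\<dots> \<le> l1_dist p q"
    unfolding l1_dist_def using assms by (intro sum_mono mult_left_le) auto
  finally show ?thesis .
qed

lemma l1_dist_eq_expectation_sign_diff:
  "l1_dist p q = measure_pmf.expectation p (\<lambda>z. if pmf q z \<le> pmf p z then 1 else -1)
               - measure_pmf.expectation q (\<lambda>z. if pmf q z \<le> pmf p z then 1 else -1)"
  unfolding expectation_finite_type l1_dist_def sum_subtractf[symmetric] by (intro sum.cong) auto

lemma expectation_Pi_pmf_diff_le:
  fixes p q :: "'d::finite \<Rightarrow> 'o::finite pmf"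
  assumes "\<And>f. \<bar>V f\<bar> \<le> 1"
  shows "measure_pmf.expectation (Pi_pmf A dflt p) V - measure_pmf.expectation (Pi_pmf A dflt q) V
           \<le> (\<Sum>i\<in>A. l1_dist (p i) (q i))"
  using finite assms
proof (induction A arbitrary: V rule: finite_induct)
  case empty
  then show ?case by simp
next
  case (insert i A)
  define Wp where "Wp y = measure_pmf.expectation (Pi_pmf A dflt p) (\<lambda>f. V (f(i:=y)))" for y
  define Wq where "Wq y = measure_pmf.expectation (Pi_pmf A dflt q) (\<lambda>f. V (f(i:=y)))" for y
  have "measure_pmf.expectation (Pi_pmf (insert i A) dflt p) V = measure_pmf.expectation (p i) Wp"
       "measure_pmf.expectation (Pi_pmf (insert i A) dflt q) V = measure_pmf.expectation (q i) Wq"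
    unfolding Wp_def Wq_def using insert.hyps
    by (simp_all add: Pi_pmf_insert expectation_pair_pmf_finite case_prod_beta)
  moreover have "measure_pmf.expectation (p i) Wp - measure_pmf.expectation (q i) Wp \<le> l1_dist (p i) (q i)"
    unfolding Wp_def by (intro expectation_diff_le_l1_dist abs_expectation_le insert.prems)
  moreover have "measure_pmf.expectation (q i) Wp - measure_pmf.expectation (q i) Wq
                   \<le> (\<Sum>j\<in>A. l1_dist (p j) (q j))"
  proof -
    have "Wp y - Wq y \<le> (\<Sum>j\<in>A. l1_dist (p j) (q j))" for y
      unfolding Wp_def Wq_def using insert.prems by (intro insert.IH) simp
    then have "measure_pmf.expectation (q i) (\<lambda>y. Wp y - Wq y) \<le> (\<Sum>j\<in>A. l1_dist (p j) (q j))"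
      by (intro measure_pmf.integral_le_const) (auto simp: integrable_measure_pmf_finite)
    then show ?thesis
      by (simp add: expectation_finite_type sum_subtractf right_diff_distrib)
  qed
  ultimately show ?case using insert.hyps by simp
qed

lemma expectation_Pi_pmf_sum_components:
  fixes p :: "'d::finite \<Rightarrow> 'o::finite pmf" and \<phi> :: "'d \<Rightarrow> 'o \<Rightarrow> real"
  shows "measure_pmf.expectation (Pi_pmf A dflt p) (\<lambda>f. \<Sum>i\<in>A. \<phi> i (f i))
       = (\<Sum>i\<in>A. measure_pmf.expectation (p i) (\<phi> i))"
proof -
  have "measure_pmf.expectation (Pi_pmf A dflt p) (\<lambda>f. \<Sum>i\<in>A. \<phi> i (f i))
      = (\<Sum>i\<in>A. measure_pmf.expectation (map_pmf (\<lambda>f. f i) (Pi_pmf A dflt p)) (\<phi> i))"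
    by (subst Bochner_Integration.integral_sum) (auto simp: integrable_measure_pmf_finite)
  also have "\<dots> = (\<Sum>i\<in>A. measure_pmf.expectation (p i) (\<phi> i))"
    by (intro sum.cong refl) (simp add: Pi_pmf_component)
  finally show ?thesis .
qed

lemma
  fixes Rp :: "real pmf" and P :: "'x::finite pmf" and W :: "'x \<Rightarrow> real"
  assumes "integrable (measure_pmf Rp) (\<lambda>r. r)"
  shows integrable_reward_plus_value: "integrable (pair_pmf Rp P) (\<lambda>(r, x). r + W x)"
    and expectation_reward_plus_value: "measure_pmf.expectation (pair_pmf Rp P) (\<lambda>(r, x). r + W x)
          = measure_pmf.expectation Rp (\<lambda>r. r) + measure_pmf.expectation P W"
proof -
  have "integrable (map_pmf fst (pair_pmf Rp P)) (\<lambda>r. r)"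
    unfolding map_fst_pair_pmf by (rule assms)
  then have fst: "integrable (pair_pmf Rp P) (\<lambda>z. fst z)"
    by simp
  have "integrable (map_pmf snd (pair_pmf Rp P)) W"
    unfolding map_snd_pair_pmf by (rule integrable_measure_pmf_finite) simp
  then have snd: "integrable (pair_pmf Rp P) (\<lambda>z. W (snd z))"
    by simp
  have split: "(\<lambda>(r, x). r + W x) = (\<lambda>z. fst z + W (snd z))"
    by auto
  show "integrable (pair_pmf Rp P) (\<lambda>(r, x). r + W x)"
    unfolding split using fst snd by (rule Bochner_Integration.integrable_add)
  show "measure_pmf.expectation (pair_pmf Rp P) (\<lambda>(r, x). r + W x)
          = measure_pmf.expectation Rp (\<lambda>r. r) + measure_pmf.expectation P W"
    unfolding split Bochner_Integration.integral_add[OF fst snd]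
    using expectation_pair_pmf_fst[of Rp P "\<lambda>r. r"] by simp
qed

lemma integrable_unit_interval_pmf:
  fixes Rp :: "real pmf"
  assumes "set_pmf Rp \<subseteq> {0..1}"
  shows "integrable (measure_pmf Rp) (\<lambda>r. r)"
  by (rule measure_pmf.integrable_const_bound[where B=1]) (use assms in \<open>auto simp: AE_measure_pmf_iff\<close>)

lemma Vrem_nonneg:
  assumes reward_range: "\<forall>k s a. set_pmf (R k s a) \<subseteq> {0..1}"
  shows "0 \<le> Vrem R M n j s"
proof (induction n arbitrary: j s)
  case 0
  then show ?case by simp
next
  case (Suc n)
  let ?Q = "\<lambda>a. measure_pmf.expectation (pair_pmf (R j s a) (trans M j s a))
                   (\<lambda>(r, s'). r + Vrem R M n (Suc j) s')"
  have "0 \<le> ?Q undefined"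
    using reward_range Suc.IH by (intro integral_nonneg_AE) (force simp: AE_measure_pmf_iff)
  also have "\<dots> \<le> Max (range ?Q)"
    by (rule Max_ge) auto
  finally show ?case by simp
qed

lemma Vrem_le_reward_bound:
  assumes reward_range: "\<forall>k s a. set_pmf (R k s a) \<subseteq> {0..1}"
    and bound: "\<And>ss aa rr. \<forall>l\<in>{j..<j+n}. rr l \<in> set_pmf (R l (ss l) (aa l))
                   \<Longrightarrow> (\<Sum>l\<in>{j..<j+n}. rr l) \<le> B"
  shows "Vrem R M n j s \<le> B"
  using bound
proof (induction n arbitrary: j s B)
  case 0
  then show ?case by simp
next
  case (Suc n)
  let ?Q = "\<lambda>a. measure_pmf.expectation (pair_pmf (R j s a) (trans M j s a))
                   (\<lambda>(r, s'). r + Vrem R M n (Suc j) s')"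
  have "?Q a \<le> B" for a
  proof (rule measure_pmf.integral_le_const)
    show "integrable (pair_pmf (R j s a) (trans M j s a)) (\<lambda>(r, s'). r + Vrem R M n (Suc j) s')"
      using reward_range by (intro integrable_reward_plus_value integrable_unit_interval_pmf) auto
    have "r + Vrem R M n (Suc j) s' \<le> B" if r: "r \<in> set_pmf (R j s a)" for r s'
    proof -
      have "Vrem R M n (Suc j) s' \<le> B - r"
      proof (rule Suc.IH)
        fix ss aa rr
        assume "\<forall>l\<in>{Suc j..<Suc j+n}. rr l \<in> set_pmf (R l (ss l) (aa l))"
        then have "\<forall>l\<in>{j..<j+Suc n}. (rr(j:=r)) l \<in> set_pmf (R l ((ss(j:=s)) l) ((aa(j:=a)) l))"
          using r by auto
        then have "(\<Sum>l\<in>{j..<j+Suc n}. (rr(j:=r)) l) \<le> B"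
          by (rule Suc.prems)
        moreover have "(\<Sum>l\<in>{j..<j+Suc n}. (rr(j:=r)) l) = r + (\<Sum>l\<in>{Suc j..<Suc j+n}. rr l)"
          by (subst sum.atLeast_Suc_lessThan) (auto intro!: sum.cong)
        ultimately show "(\<Sum>l\<in>{Suc j..<Suc j+n}. rr l) \<le> B - r"
          by simp
      qed
      then show ?thesis by simp
    qed
    then show "AE z in pair_pmf (R j s a) (trans M j s a). (\<lambda>(r, s'). r + Vrem R M n (Suc j) s') z \<le> B"
      by (auto simp: AE_measure_pmf_iff)
  qed
  then have "Max (range ?Q) \<le> B"
    by (subst Max_le_iff) auto
  then show ?case by simp
qed

lemma reward_suffix_sum_le_one:
  fixes R :: "nat \<Rightarrow> ('d \<Rightarrow> 'o) \<Rightarrow> 'a \<Rightarrow> real pmf"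
  assumes reward_range: "\<forall>k s a. set_pmf (R k s a) \<subseteq> {0..1}"
    and total_reward: "\<forall>(ss :: nat \<Rightarrow> 'd \<Rightarrow> 'o) (aa :: nat \<Rightarrow> 'a) (rr :: nat \<Rightarrow> real).
           ss 0 \<in> set_pmf s0 \<and> (\<forall>k<H. rr k \<in> set_pmf (R k (ss k) (aa k)))
           \<longrightarrow> (\<Sum>k<H. rr k) \<le> 1"
    and "0 < j" "j \<le> H"
    and path: "\<forall>l\<in>{j..<H}. rr l \<in> set_pmf (R l (ss l) (aa l))"
  shows "(\<Sum>l\<in>{j..<H}. rr l) \<le> 1"
proof -
  \<comment> \<open>The hypothesis only speaks about whole episodes from \<open>set_pmf s0\<close>, so we prepend a
    prefix of layers \<open>< j\<close> whose rewards are in the (nonempty) supports, hence nonnegative.\<close>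
  obtain x0 where x0: "x0 \<in> set_pmf s0"
    using set_pmf_not_empty by fast
  define ss' where "ss' = ss(0 := x0)"
  define rr' where "rr' l = (if l < j then (SOME r. r \<in> set_pmf (R l (ss' l) (aa l))) else rr l)" for l
  have rr'_in: "rr' l \<in> set_pmf (R l (ss' l) (aa l))" if "l < H" for l
    using path that \<open>0 < j\<close>
    by (cases "l < j") (auto simp: rr'_def ss'_def some_in_eq set_pmf_not_empty)
  have "ss' 0 \<in> set_pmf s0"
    using x0 by (simp add: ss'_def)
  then have "(\<Sum>l<H. rr' l) \<le> 1"
    using total_reward rr'_in by blast
  moreover have "(\<Sum>l<H. rr' l) = (\<Sum>l<j. rr' l) + (\<Sum>l\<in>{j..<H}. rr l)"
  proof -
    have "(\<Sum>l<H. rr' l) = (\<Sum>l<j. rr' l) + (\<Sum>l\<in>{j..<H}. rr' l)"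
      using \<open>j \<le> H\<close> by (simp add: lessThan_atLeast0 sum.atLeastLessThan_concat)
    also have "(\<Sum>l\<in>{j..<H}. rr' l) = (\<Sum>l\<in>{j..<H}. rr l)"
      by (intro sum.cong) (auto simp: rr'_def)
    finally show ?thesis .
  qed
  moreover have "0 \<le> (\<Sum>l<j. rr' l)"
  proof (rule sum_nonneg)
    fix l assume "l \<in> {..<j}"
    then have "rr' l \<in> set_pmf (R l (ss' l) (aa l))"
      using rr'_in \<open>j \<le> H\<close> by simp
    then show "0 \<le> rr' l"
      using reward_range by fastforce
  qed
  ultimately show ?thesis by linarith
qed

lemma abs_Vopt_le_one:
  fixes R :: "nat \<Rightarrow> ('d::finite \<Rightarrow> 'o::finite) \<Rightarrow> 'a::finite \<Rightarrow> real pmf"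
  assumes reward_range: "\<forall>k s a. set_pmf (R k s a) \<subseteq> {0..1}"
    and total_reward: "\<forall>(ss :: nat \<Rightarrow> 'd \<Rightarrow> 'o) (aa :: nat \<Rightarrow> 'a) (rr :: nat \<Rightarrow> real).
           ss 0 \<in> set_pmf s0 \<and> (\<forall>k<H. rr k \<in> set_pmf (R k (ss k) (aa k)))
           \<longrightarrow> (\<Sum>k<H. rr k) \<le> 1"
    and "0 < j" "j \<le> H"
  shows "\<bar>Vopt R M H j s\<bar> \<le> 1"
proof -
  have "Vopt R M H j s \<le> 1"
    unfolding Vopt_def
  proof (rule Vrem_le_reward_bound[OF reward_range])
    fix ss aa rr
    assume "\<forall>l\<in>{j..<j + (H - j)}. rr l \<in> set_pmf (R l (ss l) (aa l))"
    then show "(\<Sum>l\<in>{j..<j + (H - j)}. rr l) \<le> 1"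
      using reward_suffix_sum_le_one[OF assms] \<open>j \<le> H\<close> by simp
  qed
  moreover have "0 \<le> Vopt R M H j s"
    unfolding Vopt_def by (rule Vrem_nonneg[OF reward_range])
  ultimately show ?thesis by simp
qed

definition expectation_gap ::
    "(nat \<Rightarrow> ('d::finite \<Rightarrow> 'o) \<Rightarrow> 'a \<Rightarrow> real pmf) \<Rightarrow> ('d, 'o, 'a) model \<Rightarrow> ('d, 'o, 'a) model
      \<Rightarrow> nat \<Rightarrow> ('d \<Rightarrow> 'o) \<Rightarrow> 'a \<Rightarrow> (real \<Rightarrow> ('d \<Rightarrow> 'o) \<Rightarrow> real) \<Rightarrow> real" where
  "expectation_gap R M' M h s a \<phi> =
     measure_pmf.expectation (pair_pmf (R h s a) (trans M' h s a)) (case_prod \<phi>)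
   - measure_pmf.expectation (pair_pmf (R h s a) (trans M h s a)) (case_prod \<phi>)"

definition factor_l1_dist ::
    "('d::finite, 'o::finite, 'a) model \<Rightarrow> ('d, 'o, 'a) model \<Rightarrow> nat \<Rightarrow> ('d \<Rightarrow> 'o) \<Rightarrow> 'a \<Rightarrow> real" where
  "factor_l1_dist M' M h s a = (\<Sum>i\<in>UNIV. l1_dist (M' i h s a) (M i h s a))"

lemma factor_l1_dist_nonneg: "0 \<le> factor_l1_dist M' M h s a"
  unfolding factor_l1_dist_def by (intro sum_nonneg l1_dist_nonneg)

lemma expectation_gap_value_le_factor_l1_dist:
  fixes R :: "nat \<Rightarrow> ('d::finite \<Rightarrow> 'o::finite) \<Rightarrow> 'a \<Rightarrow> real pmf"
  assumes "set_pmf (R h s a) \<subseteq> {0..1}" and "\<And>x. \<bar>V x\<bar> \<le> 1"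
  shows "expectation_gap R M' M h s a (\<lambda>r x. r + V x) \<le> factor_l1_dist M' M h s a"
proof -
  have "expectation_gap R M' M h s a (\<lambda>r x. r + V x)
      = measure_pmf.expectation (trans M' h s a) V - measure_pmf.expectation (trans M h s a) V"
    unfolding expectation_gap_def
    by (simp add: expectation_reward_plus_value[OF integrable_unit_interval_pmf[OF assms(1)]])
  also have "\<dots> \<le> factor_l1_dist M' M h s a"
    unfolding trans_def factor_l1_dist_def by (rule expectation_Pi_pmf_diff_le) (rule assms(2))
  finally show ?thesis .
qed

definition sign_test ::
    "('d, 'o, 'a) model \<Rightarrow> ('d, 'o, 'a) model
      \<Rightarrow> 'd \<Rightarrow> nat \<Rightarrow> ('d \<Rightarrow> 'o) \<Rightarrow> 'a \<Rightarrow> real \<Rightarrow> ('d \<Rightarrow> 'o) \<Rightarrow> real" where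
  "sign_test M' M i h s a r s' =
     (if pmf (M i h s a) (s' i) \<le> pmf (M' i h s a) (s' i) then 1 else -1)"

definition sign_witness ::
    "('d::finite, 'o, 'a) model \<Rightarrow> ('d, 'o, 'a) model
      \<Rightarrow> nat \<Rightarrow> ('d \<Rightarrow> 'o) \<Rightarrow> 'a \<Rightarrow> real \<Rightarrow> ('d \<Rightarrow> 'o) \<Rightarrow> real" where
  "sign_witness M' M h s a r s' = (\<Sum>i\<in>UNIV. sign_test M' M i h s a r s')"

lemma sign_test_in_Gset:
  fixes M M' :: "('d, 'o, 'a) model"
  assumes "factored pa M" and "factored pa M'"
  shows "sign_test M' M i \<in> Gset pa i"
  unfolding Gset_def mem_Collect_eq
proof (intro conjI allI impI)
  show "sign_test M' M i h s a r s' \<in> {-1, 1}" for h s a r s'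
    by (simp add: sign_test_def)
  fix h and s t s' t' :: "'d \<Rightarrow> 'o" and a r r'
  assume parents: "restrict s (pa i) = restrict t (pa i) \<and> s' i = t' i"
  then have "M i h s a = M i h t a" and "M' i h s a = M' i h t a"
    using assms unfolding factored_def by blast+
  then show "sign_test M' M i h s a r s' = sign_test M' M i h t a r' t'"
    using parents by (simp add: sign_test_def)
qed

lemma sign_witness_in_Fclass:
  assumes "factored pa M" and "factored pa M'"
  shows "sign_witness M' M \<in> Fclass pa"
  unfolding Fclass_def
  by (intro CollectI exI[of _ "sign_test M' M"])
     (auto simp: sign_test_in_Gset[OF assms] sign_witness_def fun_eq_iff)

lemma expectation_gap_sign_witness:
  "expectation_gap R M' M h s a (sign_witness M' M h s a) = factor_l1_dist M' M h s a"
proof -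
  define \<psi> where "\<psi> i = (\<lambda>z. if pmf (M i h s a) z \<le> pmf (M' i h s a) z then 1 else -1 :: real)" for i
  have split: "case_prod (sign_witness M' M h s a) = (\<lambda>z. (\<lambda>s'. \<Sum>i\<in>UNIV. \<psi> i (s' i)) (snd z))"
    by (auto simp: sign_witness_def sign_test_def \<psi>_def fun_eq_iff)
  have "measure_pmf.expectation (pair_pmf (R h s a) (trans N h s a)) (case_prod (sign_witness M' M h s a))
      = measure_pmf.expectation (trans N h s a) (\<lambda>s'. \<Sum>i\<in>UNIV. \<psi> i (s' i))" for N
    unfolding split by (rule expectation_pair_pmf_snd)
  also have "\<dots> N = (\<Sum>i\<in>UNIV. measure_pmf.expectation (N i h s a) (\<psi> i))" for N
    unfolding trans_def by (rule expectation_Pi_pmf_sum_components)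
  finally have expectation_sign_witness:
    "measure_pmf.expectation (pair_pmf (R h s a) (trans N h s a)) (case_prod (sign_witness M' M h s a))
       = (\<Sum>i\<in>UNIV. measure_pmf.expectation (N i h s a) (\<psi> i))" for N .
  show ?thesis
    by (simp add: expectation_gap_def expectation_sign_witness factor_l1_dist_def
        l1_dist_eq_expectation_sign_diff \<psi>_def sum_subtractf)
qed

lemma abs_Fclass_le:
  fixes f :: "nat \<Rightarrow> ('d::finite \<Rightarrow> 'o) \<Rightarrow> 'a \<Rightarrow> real \<Rightarrow> ('d \<Rightarrow> 'o) \<Rightarrow> real"
  assumes "f \<in> Fclass pa"
  shows "\<bar>f h s a r s'\<bar> \<le> real CARD('d)"
proof -
  obtain g where g: "\<And>i. g i \<in> Gset pa i" and f: "f = (\<lambda>h s a r s'. \<Sum>i\<in>UNIV. g i h s a r s')"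
    using assms unfolding Fclass_def by blast
  have "\<bar>g i h s a r s'\<bar> = 1" for i
  proof -
    have "g i h s a r s' \<in> {-1, 1}"
      using g[of i] unfolding Gset_def by blast
    then show ?thesis by auto
  qed
  then have "(\<Sum>i\<in>UNIV. \<bar>g i h s a r s'\<bar>) = real CARD('d)"
    by simp
  then show ?thesis
    unfolding f by (metis sum_abs)
qed

lemma abs_expectation_gap_le:
  assumes "\<And>r x. \<bar>\<phi> r x\<bar> \<le> C"
  shows "\<bar>expectation_gap R M' M h s a \<phi>\<bar> \<le> 2 * C"
proof -
  have bound: "\<bar>measure_pmf.expectation p (case_prod \<phi>)\<bar> \<le> C" for p
    using assms by (intro abs_expectation_le) (simp add: case_prod_beta)
  show ?thesis
    unfolding expectation_gap_def
    using bound[of "pair_pmf (R h s a) (trans M' h s a)"] bound[of "pair_pmf (R h s a) (trans M h s a)"]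
    by linarith
qed

lemma expectation_gap_le_WF:
  fixes R :: "nat \<Rightarrow> ('d::finite \<Rightarrow> 'o::finite) \<Rightarrow> 'a::finite \<Rightarrow> real pmf"
    and f :: "nat \<Rightarrow> ('d \<Rightarrow> 'o) \<Rightarrow> 'a \<Rightarrow> real \<Rightarrow> ('d \<Rightarrow> 'o) \<Rightarrow> real"
  assumes "f \<in> Fclass pa"
  shows "measure_pmf.expectation (pair_pmf (sdist s0 Mstar piM h) (pmf_of_set UNIV))
           (\<lambda>(s, a). expectation_gap R M' Mstar h s a (f h s a))
         \<le> WF R pa s0 Mstar piM M' h"
proof -
  define W where "W g = measure_pmf.expectation (pair_pmf (sdist s0 Mstar piM h) (pmf_of_set UNIV))
                 (\<lambda>(s, a). expectation_gap R M' Mstar h s a (g h s a))"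
    for g :: "nat \<Rightarrow> ('d \<Rightarrow> 'o) \<Rightarrow> 'a \<Rightarrow> real \<Rightarrow> ('d \<Rightarrow> 'o) \<Rightarrow> real"
  have "WF R pa s0 Mstar piM M' h = (SUP g\<in>Fclass pa. W g)"
    unfolding WF_def W_def expectation_gap_def ..
  moreover have "bdd_above (W ` Fclass pa)"
  proof (rule bdd_aboveI2)
    fix g :: "nat \<Rightarrow> ('d \<Rightarrow> 'o) \<Rightarrow> 'a \<Rightarrow> real \<Rightarrow> ('d \<Rightarrow> 'o) \<Rightarrow> real"
    assume "g \<in> Fclass pa"
    then have "\<bar>expectation_gap R M' Mstar h s a (g h s a)\<bar> \<le> 2 * real CARD('d)" for s a
      by (intro abs_expectation_gap_le abs_Fclass_le)
    then have "\<bar>W g\<bar> \<le> 2 * real CARD('d)"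
      unfolding W_def by (intro abs_expectation_le) (simp add: case_prod_beta)
    then show "W g \<le> 2 * real CARD('d)"
      by simp
  qed
  ultimately show ?thesis
    using cSUP_upper[OF assms] by (simp add: W_def)
qed

lemma expectation_policy_le_card_uniform:
  fixes T :: "'s::finite \<Rightarrow> 'a::finite \<Rightarrow> real"
  assumes "\<And>s a. 0 \<le> T s a"
  shows "measure_pmf.expectation d (\<lambda>s. T s (\<pi> s))
           \<le> real CARD('a) * measure_pmf.expectation (pair_pmf d (pmf_of_set UNIV)) (\<lambda>(s, a). T s a)"
proof -
  have "measure_pmf.expectation (pair_pmf d (pmf_of_set UNIV)) (\<lambda>(s, a). T s a)
      = measure_pmf.expectation d (\<lambda>s. measure_pmf.expectation (pmf_of_set UNIV) (T s))"
    using expectation_pair_pmf_finite[of d "pmf_of_set UNIV" "\<lambda>(s, a). T s a"] by simp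
  also have "\<dots> = measure_pmf.expectation d (\<lambda>s. (\<Sum>a\<in>UNIV. T s a) / real CARD('a))"
    by (subst integral_pmf_of_set) auto
  also have "\<dots> = measure_pmf.expectation d (\<lambda>s. \<Sum>a\<in>UNIV. T s a) / real CARD('a)"
    by (rule integral_divide_zero)
  finally have uniform:
    "real CARD('a) * measure_pmf.expectation (pair_pmf d (pmf_of_set UNIV)) (\<lambda>(s, a). T s a)
       = measure_pmf.expectation d (\<lambda>s. \<Sum>a\<in>UNIV. T s a)"
    by simp
  have "T s (\<pi> s) \<le> (\<Sum>a\<in>UNIV. T s a)" for s
    by (rule member_le_sum) (use assms in auto)
  then have "measure_pmf.expectation d (\<lambda>s. T s (\<pi> s)) \<le> measure_pmf.expectation d (\<lambda>s. \<Sum>a\<in>UNIV. T s a)"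
    by (intro integral_mono) (simp_all add: integrable_measure_pmf_finite)
  then show ?thesis
    unfolding uniform .
qed

theorem mainTheorem11:
  fixes pa :: "'d::finite \<Rightarrow> 'd set"
    and R :: "nat \<Rightarrow> ('d \<Rightarrow> 'o::finite) \<Rightarrow> 'a::finite \<Rightarrow> real pmf"
    and H :: nat
    and s0 :: "('d \<Rightarrow> 'o) pmf"
    and Mstar M M' :: "('d, 'o, 'a) model"
    and piM piM' :: "nat \<Rightarrow> ('d \<Rightarrow> 'o) \<Rightarrow> 'a"
    and h :: nat
  assumes reward_range: "\<forall>k s a. set_pmf (R k s a) \<subseteq> {0..1}"
    and total_reward: "\<forall>(ss :: nat \<Rightarrow> 'd \<Rightarrow> 'o) (aa :: nat \<Rightarrow> 'a) (rr :: nat \<Rightarrow> real).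
           ss 0 \<in> set_pmf s0 \<and> (\<forall>k<H. rr k \<in> set_pmf (R k (ss k) (aa k)))
           \<longrightarrow> (\<Sum>k<H. rr k) \<le> 1"
    and true_model: "factored pa Mstar"
    and M_in: "factored pa M"
    and M'_in: "factored pa M'"
    and piM_greedy: "greedy R M H piM"
    and piM'_greedy: "greedy R M' H piM'"
    and h_layer: "h < H"
  shows "EB R H s0 Mstar piM M' piM' h / real CARD('a) \<le> WF R pa s0 Mstar piM M' h"
proof -
  let ?d = "sdist s0 Mstar piM h"
  let ?V = "Vopt R M' H (Suc h)"
  let ?T = "factor_l1_dist M' Mstar h"
  have V: "\<bar>?V x\<bar> \<le> 1" for x
    using abs_Vopt_le_one[OF reward_range total_reward] h_layer by simp
  have gap: "expectation_gap R M' Mstar h s a (\<lambda>r x. r + ?V x) \<le> ?T s a" for s a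
    using reward_range by (intro expectation_gap_value_le_factor_l1_dist V) auto
  have "EB R H s0 Mstar piM M' piM' h
      = measure_pmf.expectation ?d (\<lambda>s. expectation_gap R M' Mstar h s (piM' h s) (\<lambda>r x. r + ?V x))"
    by (simp add: EB_def expectation_gap_def Let_def)
  also have "\<dots> \<le> measure_pmf.expectation ?d (\<lambda>s. ?T s (piM' h s))"
    using gap by (intro integral_mono) (simp_all add: integrable_measure_pmf_finite)
  also have "\<dots> \<le> real CARD('a) * measure_pmf.expectation (pair_pmf ?d (pmf_of_set UNIV)) (\<lambda>(s, a). ?T s a)"
    by (rule expectation_policy_le_card_uniform) (rule factor_l1_dist_nonneg)
  also have "\<dots> = real CARD('a) * measure_pmf.expectation (pair_pmf ?d (pmf_of_set UNIV))
                    (\<lambda>(s, a). expectation_gap R M' Mstar h s a (sign_witness M' Mstar h s a))"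
    by (simp add: expectation_gap_sign_witness)
  also have "\<dots> \<le> real CARD('a) * WF R pa s0 Mstar piM M' h"
    using expectation_gap_le_WF[OF sign_witness_in_Fclass[OF true_model M'_in]]
    by (intro mult_left_mono) simp_all
  finally show ?thesis
    by (simp add: divide_le_eq mult.commute)
qed

end
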